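(* Let $n\ge 3$ and let $t:\{2,\dots,n-1\}\to[0,\infty)$ be arbitrary (the time to evaluate all coalitions of each size). For $S\subseteq\{2,\dots,n-1\}$ put $T(S)=\sum_{s\in S}t(s)$. Call a pair $(S_1,S_2)$ of subsets of $\{2,\dots,n-1\}$ covering if every integer partition of $n$ is reachable from $[n]$ in $G_{S_1\cup\{n\}}$ or in $G_{S_2\cup\{n\}}$. Then $$\min_{(S_1,S_2)\ \text{covering}}\ \max\big(T(S_1),T(S_2)\big)\;\le\;T\big(\{2,3,\dots,\lfloor 2n/3\rfloor\}\big),$$ i.e., the run time of CDP with the pair of size sets chosen by the SSD procedure (a covering pair minimizing $\max(T(S_1),T(S_2))$) is at most the run time of IDP, which evaluates the sizes $\{2,3,\dots,\lfloor 2n/3\rfloor,n\}$.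
   Context: Restricted integer partition graph: for a set $S\subseteq\{2,\dots,n\}$, $G_S$ is the directed graph whose nodes are the integer partitions of $n$ (multisets of positive integers summing to $n$), with an edge from $P$ to $P'$ whenever $P'$ is obtained from $P$ by replacing a single part $x$ of $P$ with $x\in S$ by two positive parts $x_1,x_2$ with $x_1+x_2=x$. The node $[n]$ is the partition with one part. The run time of a pair of size sets is the maximum of the run times of its two sets (they are processed in parallel), and the run time of a size set is the sum of the per-size evaluation times; size $n$ is always evaluated and size $1$ never, so they are excluded from $T$. *)

theory Defs
  imports Complex_Main "HOL-Library.Multiset"
begin

definition int_partition :: "nat \<Rightarrow> nat multiset \<Rightarrow> bool" where
  "int_partition n P \<longleftrightarrow> (\<forall>x\<in>#P. 0 < x) \<and> sum_mset P = n"

definition partition_edge :: "nat \<Rightarrow> nat set \<Rightarrow> nat multiset \<Rightarrow> nat multiset \<Rightarrow> bool" where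
  "partition_edge n S P P' \<longleftrightarrow> int_partition n P \<and> int_partition n P' \<and>
     (\<exists>x x1 x2. x \<in># P \<and> x \<in> S \<and> 0 < x1 \<and> 0 < x2 \<and> x1 + x2 = x \<and>
        P' = P - {#x#} + {#x1, x2#})"

definition reachable_in :: "nat \<Rightarrow> nat set \<Rightarrow> nat multiset \<Rightarrow> bool" where
  "reachable_in n S P \<longleftrightarrow> (partition_edge n S)\<^sup>*\<^sup>* {#n#} P"

definition covering :: "nat \<Rightarrow> nat set \<Rightarrow> nat set \<Rightarrow> bool" where
  "covering n S1 S2 \<longleftrightarrow> S1 \<subseteq> {2..n-1} \<and> S2 \<subseteq> {2..n-1} \<and>
     (\<forall>P. int_partition n P \<longrightarrow>
        reachable_in n (S1 \<union> {n}) P \<or> reachable_in n (S2 \<union> {n}) P)"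

definition run_time :: "(nat \<Rightarrow> real) \<Rightarrow> nat set \<Rightarrow> real" where
  "run_time t S = (\<Sum>s\<in>S. t s)"

end

theory Submission
  imports Defs
begin

text \<open>The pair (S, S) with S = {2, ..., \<lfloor>2n/3\<rfloor>} is itself covering, so the minimum is
  at most max (T S) (T S) = T S. To reach a partition P of n
  using only parts of size at most 2n/3 (besides n itself), write P = A + B where B has total at
  most 2n/3 and A is either a single part or also has total at most 2n/3: take for A a smallest
  sub-multiset of total at least n/3. The first edge splits n into the two totals, and each
  total is then peeled apart one part at a time; every intermediate part is a subtotal of A
  or of B.\<close>

lemma sum_mset_pos:
  "\<forall>x\<in>#Q. 0 < (x::nat) \<Longrightarrow> Q \<noteq> {#} \<Longrightarrow> 0 < sum_mset Q"
  by (metis gr0I less_irrefl multiset_nonemptyE sum_mset_0_iff)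

lemma int_partition_collapse:
  assumes "int_partition n (C + Q)" "Q \<noteq> {#}"
  shows "int_partition n (add_mset (sum_mset Q) C)"
  using assms sum_mset_pos[of Q] unfolding int_partition_def by auto

lemma partition_edge_splitI:
  assumes "int_partition n (add_mset (x1 + x2) C)" "0 < x1" "0 < x2" "x1 + x2 \<in> S"
  shows "partition_edge n S (add_mset (x1 + x2) C) (add_mset x1 (add_mset x2 C))"
  using assms unfolding partition_edge_def int_partition_def by fastforce

lemma partition_edge_rtranclp_unfold:
  assumes "int_partition n (C + Q)" "Q \<noteq> {#}"
    and "1 < size Q \<Longrightarrow> {2..sum_mset Q} \<subseteq> S"
  shows "(partition_edge n S)\<^sup>*\<^sup>* (add_mset (sum_mset Q) C) (C + Q)"
  using assms
proof (induction Q arbitrary: C)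
  case empty
  then show ?case by simp
next
  case (add a Q)
  show ?case
  proof (cases "Q = {#}")
    case True
    then show ?thesis by simp
  next
    case False
    have pos: "0 < a" "0 < sum_mset Q"
      using add.prems(1) sum_mset_pos[OF _ False] unfolding int_partition_def by auto
    have "a + sum_mset Q \<in> S"
      using add.prems(3) False pos by (auto simp: nonempty_has_size)
    then have first: "partition_edge n S (add_mset (a + sum_mset Q) C)
                        (add_mset a (add_mset (sum_mset Q) C))"
      using partition_edge_splitI int_partition_collapse[OF add.prems(1)] pos by fastforce
    have "{2..sum_mset Q} \<subseteq> S"
      using add.prems(3) False by (auto simp: nonempty_has_size)
    then have rest: "(partition_edge n S)\<^sup>*\<^sup>* (add_mset (sum_mset Q) (add_mset a C))
                       (C + add_mset a Q)"
      using add.IH[of "add_mset a C"] add.prems(1) False by auto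
    from first rest show ?thesis
      by (simp add: add_mset_commute converse_rtranclp_into_rtranclp)
  qed
qed

lemma mset_split_two_thirds:
  fixes P :: "nat multiset"
  assumes "2 \<le> size P"
  shows "\<exists>A B. P = A + B \<and> A \<noteq> {#} \<and> B \<noteq> {#} \<and>
           (size A = 1 \<or> 3 * sum_mset A \<le> 2 * sum_mset P) \<and> 3 * sum_mset B \<le> 2 * sum_mset P"
proof -
  let ?big = "\<lambda>A. A \<subseteq># P \<and> A \<noteq> {#} \<and> sum_mset P \<le> 3 * sum_mset A"
  have "?big P" using assms by auto
  then obtain A where A: "?big A" and A_min: "\<And>A'. ?big A' \<Longrightarrow> size A \<le> size A'"
    using ex_has_least_nat[of ?big P size] by blast
  define B where "B = P - A"
  have P_eq: "P = A + B" using A B_def by simp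
  have B_small: "3 * sum_mset B \<le> 2 * sum_mset P" using A P_eq by simp
  show ?thesis
  proof (cases "size A = 1")
    case True
    then have "B \<noteq> {#}" using assms P_eq by auto
    then show ?thesis using P_eq A B_small True by blast
  next
    case False
    then obtain x A' where A_eq: "A = add_mset x A'" and "A' \<noteq> {#}"
      using A by (metis multiset_cases size_single)
    have "3 * x < sum_mset P"
      using A_min[of "{#x#}"] A A_eq \<open>A' \<noteq> {#}\<close>
      by (auto simp: not_le[symmetric] dest: mset_subset_eqD)
    moreover have "3 * sum_mset A' < sum_mset P"
      using A_min[of A'] A A_eq \<open>A' \<noteq> {#}\<close> subset_mset.order_trans[of A' A P]
      by (auto simp: not_le[symmetric])
    ultimately have A_small: "3 * sum_mset A < 2 * sum_mset P" using A_eq by simp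
    then have "B \<noteq> {#}" using P_eq by auto
    then show ?thesis using P_eq A A_small B_small by (intro exI[of _ A] exI[of _ B]) auto
  qed
qed

lemma reachable_in_two_thirds:
  assumes P: "int_partition n P" and "0 < n"
  shows "reachable_in n ({2..2 * n div 3} \<union> {n}) P"
proof (cases "P = {#n#}")
  case True
  then show ?thesis unfolding reachable_in_def by simp
next
  case False
  let ?S = "{2..2 * n div 3} \<union> {n}"
  have "sum_mset P = n" using P unfolding int_partition_def by simp
  have "2 \<le> size P"
  proof (rule ccontr)
    assume "\<not> 2 \<le> size P"
    moreover have "P \<noteq> {#}" using \<open>sum_mset P = n\<close> \<open>0 < n\<close> by auto
    ultimately have "size P = 1" by (cases "size P") auto
    then obtain p where "P = {#p#}" using size_1_singleton_mset by blast
    then show False using False \<open>sum_mset P = n\<close> by simp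
  qed
  then obtain A B where AB: "P = A + B" "A \<noteq> {#}" "B \<noteq> {#}"
      and A_small: "size A = 1 \<or> 3 * sum_mset A \<le> 2 * n" and B_small: "3 * sum_mset B \<le> 2 * n"
    using mset_split_two_thirds[of P] unfolding \<open>sum_mset P = n\<close> by blast
  have pos: "0 < sum_mset A" "0 < sum_mset B"
    using P AB sum_mset_pos[of A] sum_mset_pos[of B] unfolding int_partition_def by auto
  have sums: "sum_mset A + sum_mset B = n" using \<open>sum_mset P = n\<close> AB(1) by simp
  have mid: "int_partition n (A + {#sum_mset B#})"
    using int_partition_collapse[of n A B] P AB by simp
  have "partition_edge n ?S {#sum_mset A + sum_mset B#} {#sum_mset A, sum_mset B#}"
    using partition_edge_splitI[of n "sum_mset A" "sum_mset B" "{#}" ?S] pos sums \<open>0 < n\<close>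
    unfolding int_partition_def by simp
  then have "partition_edge n ?S {#n#} {#sum_mset A, sum_mset B#}" unfolding sums .
  also have "(partition_edge n ?S)\<^sup>*\<^sup>* {#sum_mset A, sum_mset B#} ({#sum_mset B#} + A)"
  proof (rule partition_edge_rtranclp_unfold)
    show "int_partition n ({#sum_mset B#} + A)" using mid by (simp add: add.commute)
    show "A \<noteq> {#}" by (fact AB(2))
    show "1 < size A \<Longrightarrow> {2..sum_mset A} \<subseteq> ?S" using A_small by auto
  qed
  also have "{#sum_mset B#} + A = add_mset (sum_mset B) A" by simp
  also have "(partition_edge n ?S)\<^sup>*\<^sup>* (add_mset (sum_mset B) A) (A + B)"
  proof (rule partition_edge_rtranclp_unfold)
    show "int_partition n (A + B)" using P AB(1) by simp
    show "B \<noteq> {#}" by (fact AB(3))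
    show "1 < size B \<Longrightarrow> {2..sum_mset B} \<subseteq> ?S" using B_small by auto
  qed
  finally show ?thesis unfolding reachable_in_def AB(1) by (simp add: add.commute)
qed

theorem lemma1:
  fixes n :: nat and t :: "nat \<Rightarrow> real"
  assumes "n \<ge> 3"
    and "\<And>s. s \<in> {2..n-1} \<Longrightarrow> t s \<ge> 0"
  shows "Min {max (run_time t S1) (run_time t S2) | S1 S2. covering n S1 S2}
           \<le> run_time t {2..(2 * n) div 3}"
proof -
  let ?S = "{2..(2 * n) div 3}"
  let ?times = "{max (run_time t S1) (run_time t S2) | S1 S2. covering n S1 S2}"
  have "covering n ?S ?S"
    unfolding covering_def using reachable_in_two_thirds assms(1) by auto
  then have attained: "run_time t ?S \<in> ?times" by force
  have "?times \<subseteq> (\<lambda>(S1, S2). max (run_time t S1) (run_time t S2)) `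
                    (Pow {2..n-1} \<times> Pow {2..n-1})"
    unfolding covering_def by auto
  then have "finite ?times" by (rule finite_subset) auto
  from this attained show ?thesis by (rule Min_le)
qed

end
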